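(* Let $1\le a\le n$ be integers. The degree of $v_a$ in the graph $\mathcal{L}_{[a,n]}$ (counting the self-loop at $v_a$ once, i.e. the number of integers $b$ with $a\le b\le n$ and $\operatorname{lcm}(a,b)\le n$) is $$d(v_a)=\sum_{1\le j\le \frac{n}{a}}\ \sum_{\substack{1\le \ell\le j\\ \gcd(j,\ell)=1\\ \ell\mid a}} 1.$$
   Context: For integers $k\le n$, $\mathcal{L}_{[k,n]}$ is the graph with vertices $v_k,v_{k+1},\ldots,v_n$ and an edge between $v_i$ and $v_j$ whenever $\operatorname{lcm}(i,j)\le n$; in particular each vertex has a self-loop. *)

theory Defs
  imports Main
begin

text \<open>The graph L_[k,n]: vertices k..n, edge between i and j iff lcm i j \<le> n
  (self-loops included). Vertices are identified with their integer labels.\<close>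

definition lcm_graph_edge :: "nat \<Rightarrow> nat \<Rightarrow> nat \<Rightarrow> nat \<Rightarrow> bool" where
  "lcm_graph_edge k n i j \<longleftrightarrow> i \<in> {k..n} \<and> j \<in> {k..n} \<and> lcm i j \<le> n"

definition lcm_graph_degree :: "nat \<Rightarrow> nat \<Rightarrow> nat \<Rightarrow> nat" where
  "lcm_graph_degree k n v = card {b. lcm_graph_edge k n v b}"

end

theory Submission
  imports Defs
begin

text \<open>Every b > 0 factors uniquely as b = j * (a div l) with l dvd a and j, l coprime, namely with
  a div l = gcd a b. In these coordinates lcm a b = j * a, and a \<le> b becomes l \<le> j, so the
  neighbours of a in the graph correspond to the pairs (j, l) counted by the double sum.\<close>

lemma cofactors_of_gcd_iff:
  fixes a b j l :: nat
  assumes "0 < a"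
  shows "(b div gcd a b = j \<and> a div gcd a b = l) \<longleftrightarrow>
    coprime j l \<and> l dvd a \<and> j * (a div l) = b"
proof
  assume cofactors: "b div gcd a b = j \<and> a div gcd a b = l"
  define g where "g = gcd a b"
  have a_eq: "a = l * g"
    using cofactors unfolding g_def by (metis gcd_dvd1 dvd_div_mult_self)
  have b_eq: "b = j * g"
    using cofactors unfolding g_def by (metis gcd_dvd2 dvd_div_mult_self)
  have "a div l = g" using a_eq \<open>0 < a\<close> by simp
  moreover have "coprime j l"
    using div_gcd_coprime[of b a] assms cofactors by (simp add: gcd.commute)
  ultimately show "coprime j l \<and> l dvd a \<and> j * (a div l) = b"
    using a_eq b_eq by simp
next
  assume "coprime j l \<and> l dvd a \<and> j * (a div l) = b"
  then have "coprime j l" and a_eq: "a = l * (a div l)" and b_eq: "b = j * (a div l)"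
    by auto
  have "0 < a div l" using assms a_eq by (cases "a div l") auto
  have "gcd a b = gcd j l * (a div l)"
    using gcd_mult_right[of l "a div l" j] a_eq b_eq by simp
  also have "gcd j l = 1" using \<open>coprime j l\<close> by simp
  finally have "gcd a b = a div l" by simp
  then show "b div gcd a b = j \<and> a div gcd a b = l"
    using a_eq b_eq \<open>0 < a div l\<close> by (metis nonzero_mult_div_cancel_right not_gr0)
qed

lemma lcm_graph_edge_cofactors_iff:
  fixes a n j l :: nat
  assumes "0 < a" "a \<le> n" "coprime j l" "l dvd a"
  shows "lcm_graph_edge a n a (j * (a div l)) \<longleftrightarrow> l \<le> j \<and> j * a \<le> n"
proof -
  define m where "m = a div l"
  have a_eq: "a = l * m" using assms(4) by (simp add: m_def)
  have "0 < m" "0 < l" using assms(1) a_eq by auto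
  have "lcm a (j * m) = lcm j l * m"
    using lcm_mult_right[of l m j] a_eq by simp
  also have "lcm j l = j * l" using assms(3) by (simp add: lcm_coprime)
  finally have lcm_eq: "lcm a (j * m) = j * a" using a_eq by simp
  have "a \<le> j * m \<longleftrightarrow> l \<le> j" using a_eq \<open>0 < m\<close> by simp
  moreover have "j * m \<le> j * a" using a_eq \<open>0 < l\<close> by simp
  ultimately show ?thesis
    using assms(2) lcm_eq le_trans[OF \<open>j * m \<le> j * a\<close>]
    unfolding lcm_graph_edge_def m_def[symmetric] by auto
qed

lemma bij_betw_lcm_graph_neighbours:
  fixes a n :: nat
  assumes "0 < a" "a \<le> n"
  shows "bij_betw (\<lambda>(j, l). j * (a div l))
    (SIGMA j:{j. 1 \<le> j \<and> j * a \<le> n}. {l. 1 \<le> l \<and> l \<le> j \<and> coprime j l \<and> l dvd a})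
    {b. lcm_graph_edge a n a b}"
  (is "bij_betw ?f ?P ?B")
proof (rule bij_betw_byWitness[where f' = "\<lambda>b. (b div gcd a b, a div gcd a b)"])
  have pair_iff: "(j, l) \<in> ?P \<longleftrightarrow>
      coprime j l \<and> l dvd a \<and> lcm_graph_edge a n a (j * (a div l))" for j l
  proof
    assume "(j, l) \<in> ?P"
    then show "coprime j l \<and> l dvd a \<and> lcm_graph_edge a n a (j * (a div l))"
      using lcm_graph_edge_cofactors_iff[OF assms, of j l] by simp
  next
    assume cofactors: "coprime j l \<and> l dvd a \<and> lcm_graph_edge a n a (j * (a div l))"
    then have "1 \<le> l" using assms(1) by (simp add: Suc_le_eq dvd_pos_nat)
    with cofactors show "(j, l) \<in> ?P"
      using lcm_graph_edge_cofactors_iff[OF assms, of j l] by simp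
  qed
  show "\<forall>x\<in>?P. (\<lambda>b. (b div gcd a b, a div gcd a b)) (?f x) = x"
  proof
    fix x
    assume "x \<in> ?P"
    moreover obtain j l where x: "x = (j, l)" by fastforce
    ultimately have "coprime j l \<and> l dvd a" using pair_iff by blast
    then show "(\<lambda>b. (b div gcd a b, a div gcd a b)) (?f x) = x"
      using cofactors_of_gcd_iff[OF assms(1), of "j * (a div l)" j l] x by simp
  qed
  show "?f ` ?P \<subseteq> ?B"
    using pair_iff by auto
  have b_factors: "coprime (b div gcd a b) (a div gcd a b) \<and> a div gcd a b dvd a \<and>
      b div gcd a b * (a div (a div gcd a b)) = b" for b
    using cofactors_of_gcd_iff[OF assms(1)] by blast
  show "\<forall>b\<in>?B. ?f (b div gcd a b, a div gcd a b) = b"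
    using b_factors by simp
  show "(\<lambda>b. (b div gcd a b, a div gcd a b)) ` ?B \<subseteq> ?P"
  proof (rule image_subsetI)
    fix b
    assume "b \<in> ?B"
    then have "lcm_graph_edge a n a (b div gcd a b * (a div (a div gcd a b)))"
      using b_factors[of b] by simp
    then show "(b div gcd a b, a div gcd a b) \<in> ?P"
      using pair_iff[of "b div gcd a b" "a div gcd a b"] b_factors[of b] by blast
  qed
qed

theorem proposition3p1:
  fixes a n :: nat
  assumes "1 \<le> a" and "a \<le> n"
  shows "lcm_graph_degree a n a =
    (\<Sum>j\<in>{j. 1 \<le> j \<and> j * a \<le> n}.
       card {l. 1 \<le> l \<and> l \<le> j \<and> coprime j l \<and> l dvd a})"
proof -
  have "{j. 1 \<le> j \<and> j * a \<le> n} \<subseteq> {..n}"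
  proof
    fix j
    assume "j \<in> {j. 1 \<le> j \<and> j * a \<le> n}"
    then have "j * a \<le> n" by simp
    moreover have "j \<le> j * a" using assms(1) by simp
    ultimately have "j \<le> n" by linarith
    then show "j \<in> {..n}" by simp
  qed
  then have "finite {j. 1 \<le> j \<and> j * a \<le> n}"
    by (rule finite_subset) simp
  moreover have "finite {l. 1 \<le> l \<and> l \<le> j \<and> coprime j l \<and> l dvd a}" for j :: nat
    by (rule finite_subset[of _ "{..j}"]) auto
  moreover have "lcm_graph_degree a n a = card
      (SIGMA j:{j. 1 \<le> j \<and> j * a \<le> n}. {l. 1 \<le> l \<and> l \<le> j \<and> coprime j l \<and> l dvd a})"
    unfolding lcm_graph_degree_def
    using bij_betw_same_card[OF bij_betw_lcm_graph_neighbours] assms by simp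
  ultimately show ?thesis by simp
qed

end
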